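(* A quasi-orthomodular nearsemilattice $(A,\vee,\perp,0)$ is distributive if and only if it has the Riesz decomposition property.
   Context: A nearsemilattice is a poset $A$ with least element $0$ in which any two elements having a common upper bound have a join $x \vee y$ (a partial operation). It is distributive if whenever $y \vee z$ exists and $x \le y \vee z$, then $x = y' \vee z'$ for some $y' \le y$ and $z' \le z$. An orthogonality on $A$ is a binary relation $\perp$ with: $x \perp y$ implies $y \perp x$; $x \le y$ and $y \perp z$ imply $x \perp z$; $x \perp 0$ for all $x$. A quasi-orthomodular nearsemilattice is a nearsemilattice with an orthogonality such that: (a) if $x \perp y$ then $x \vee y$ exists; (b) if $x \le y$ then $y = x \vee z$ for some $z$ with $x \perp z$; (c) if $x \perp y$, $x \perp z$ and $y \le x \vee z$, then $y \le z$. Define the partial operation $x \oplus y := x \vee y$, defined exactly when $x \perp y$. The Riesz decomposition property: if $y \perp z$ and $x \le y \oplus z$, then $x = y' \oplus z'$ for some $y' \le y$ and $z' \le z$. *)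

theory Defs
  imports Main
begin

definition is_join :: "('a \<Rightarrow> 'a \<Rightarrow> bool) \<Rightarrow> 'a \<Rightarrow> 'a \<Rightarrow> 'a \<Rightarrow> bool" where
  "is_join le x y j \<longleftrightarrow> le x j \<and> le y j \<and> (\<forall>u. le x u \<and> le y u \<longrightarrow> le j u)"

definition has_join :: "('a \<Rightarrow> 'a \<Rightarrow> bool) \<Rightarrow> 'a \<Rightarrow> 'a \<Rightarrow> bool" where
  "has_join le x y \<longleftrightarrow> (\<exists>j. is_join le x y j)"

definition nearsemilattice :: "('a \<Rightarrow> 'a \<Rightarrow> bool) \<Rightarrow> 'a \<Rightarrow> bool" where
  "nearsemilattice le z \<longleftrightarrow>
     reflp le \<and> antisymp le \<and> transp le \<and> (\<forall>x. le z x) \<and>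
     (\<forall>x y. (\<exists>u. le x u \<and> le y u) \<longrightarrow> has_join le x y)"

definition distributive :: "('a \<Rightarrow> 'a \<Rightarrow> bool) \<Rightarrow> bool" where
  "distributive le \<longleftrightarrow>
     (\<forall>x y z j. is_join le y z j \<and> le x j \<longrightarrow>
        (\<exists>y' z'. le y' y \<and> le z' z \<and> is_join le y' z' x))"

definition orthogonality :: "('a \<Rightarrow> 'a \<Rightarrow> bool) \<Rightarrow> 'a \<Rightarrow> ('a \<Rightarrow> 'a \<Rightarrow> bool) \<Rightarrow> bool" where
  "orthogonality le z orth \<longleftrightarrow>
     (\<forall>x y. orth x y \<longrightarrow> orth y x) \<and>
     (\<forall>x y w. le x y \<and> orth y w \<longrightarrow> orth x w) \<and>
     (\<forall>x. orth x z)"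

definition quasi_orthomodular_nearsemilattice ::
    "('a \<Rightarrow> 'a \<Rightarrow> bool) \<Rightarrow> 'a \<Rightarrow> ('a \<Rightarrow> 'a \<Rightarrow> bool) \<Rightarrow> bool" where
  "quasi_orthomodular_nearsemilattice le z orth \<longleftrightarrow>
     nearsemilattice le z \<and> orthogonality le z orth \<and>
     (\<forall>x y. orth x y \<longrightarrow> has_join le x y) \<and>
     (\<forall>x y. le x y \<longrightarrow> (\<exists>w. orth x w \<and> is_join le x w y)) \<and>
     (\<forall>x y w j. orth x y \<and> orth x w \<and> is_join le x w j \<and> le y j \<longrightarrow> le y w)"

text \<open>Riesz decomposition: x \<oplus> y is the join of x and y, defined exactly when x \<perp> y.\<close>

definition riesz_decomposition :: "('a \<Rightarrow> 'a \<Rightarrow> bool) \<Rightarrow> ('a \<Rightarrow> 'a \<Rightarrow> bool) \<Rightarrow> bool" where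
  "riesz_decomposition le orth \<longleftrightarrow>
     (\<forall>x y z j. orth y z \<and> is_join le y z j \<and> le x j \<longrightarrow>
        (\<exists>y' z'. le y' y \<and> le z' z \<and> orth y' z' \<and> is_join le y' z' x))"

end

theory Submission
  imports Defs
begin

text \<open>Distributivity restricts to orthogonal joins because orthogonality is inherited by
  smaller elements. Conversely, given a join \<open>y \<or> w\<close>, complement \<open>y\<close> orthogonally
  inside \<open>y \<or> w\<close> and decompose \<open>w\<close> along this orthogonal sum: its part below the complement
  is orthogonal to \<open>y\<close>, lies below \<open>w\<close> and still has join \<open>y \<or> w\<close> with \<open>y\<close>. So every join
  can be rewritten as an orthogonal one, to which the Riesz property applies.\<close>

lemma nearsemilattice_trans:
  "nearsemilattice le z \<Longrightarrow> le x y \<Longrightarrow> le y w \<Longrightarrow> le x w"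
  unfolding nearsemilattice_def by (meson transpD)

lemma nearsemilattice_antisym:
  "nearsemilattice le z \<Longrightarrow> le x y \<Longrightarrow> le y x \<Longrightarrow> x = y"
  unfolding nearsemilattice_def by (meson antisympD)

lemma orthogonality_mono:
  assumes "orthogonality le z orth" "le x x'" "le y y'" "orth x' y'"
  shows "orth x y"
  using assms unfolding orthogonality_def by meson

lemma distributive_imp_riesz_decomposition:
  assumes "orthogonality le z orth" "distributive le"
  shows "riesz_decomposition le orth"
  unfolding riesz_decomposition_def
proof (intro allI impI)
  fix x y w j
  assume "orth y w \<and> is_join le y w j \<and> le x j"
  moreover from this obtain y' w' where "le y' y" "le w' w" "is_join le y' w' x"
    using assms(2) unfolding distributive_def by blast
  ultimately show "\<exists>y' w'. le y' y \<and> le w' w \<and> orth y' w' \<and> is_join le y' w' x"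
    using orthogonality_mono[OF assms(1)] by blast
qed

lemma riesz_decomposition_orthogonal_join:
  assumes qom: "quasi_orthomodular_nearsemilattice le z orth"
    and riesz: "riesz_decomposition le orth"
    and join: "is_join le y w j"
  obtains w' where "le w' w" "orth y w'" "is_join le y w' j"
proof -
  have ns: "nearsemilattice le z" and og: "orthogonality le z orth"
    using qom unfolding quasi_orthomodular_nearsemilattice_def by auto
  note trans = nearsemilattice_trans[OF ns]
  from join have "le y j" "le w j" and lub: "\<And>u. le y u \<Longrightarrow> le w u \<Longrightarrow> le j u"
    unfolding is_join_def by auto
  obtain v where "orth y v" and yv: "is_join le y v j"
    using qom \<open>le y j\<close> unfolding quasi_orthomodular_nearsemilattice_def by blast
  obtain y1 w1 where "le y1 y" "le w1 v" "is_join le y1 w1 w"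
    using riesz yv \<open>orth y v\<close> \<open>le w j\<close> unfolding riesz_decomposition_def by blast
  have "le y y" using ns unfolding nearsemilattice_def by (simp add: reflpD)
  then have "orth y w1" using orthogonality_mono[OF og _ \<open>le w1 v\<close> \<open>orth y v\<close>] by blast
  then obtain k where k: "is_join le y w1 k"
    using qom unfolding quasi_orthomodular_nearsemilattice_def has_join_def by blast
  have "le w1 w" using \<open>is_join le y1 w1 w\<close> unfolding is_join_def by blast
  have "le k j" using k \<open>le y j\<close> \<open>le w1 w\<close> \<open>le w j\<close> trans unfolding is_join_def by meson
  moreover have "le j k"
  proof (rule lub)
    show "le y k" using k unfolding is_join_def by blast
    show "le w k" using \<open>is_join le y1 w1 w\<close> k \<open>le y1 y\<close> trans unfolding is_join_def by meson
  qed
  ultimately have "k = j" using nearsemilattice_antisym[OF ns] by blast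
  with k show thesis using that \<open>le w1 w\<close> \<open>orth y w1\<close> by blast
qed

lemma riesz_decomposition_imp_distributive:
  assumes qom: "quasi_orthomodular_nearsemilattice le z orth"
    and riesz: "riesz_decomposition le orth"
  shows "distributive le"
  unfolding distributive_def
proof (intro allI impI)
  fix x y w j
  assume "is_join le y w j \<and> le x j"
  then obtain w1 where "le w1 w" "orth y w1" "is_join le y w1 j" and "le x j"
    using riesz_decomposition_orthogonal_join[OF qom riesz] by blast
  then obtain y' w' where "le y' y" "le w' w1" "is_join le y' w' x"
    using riesz unfolding riesz_decomposition_def by blast
  moreover have "le w' w"
    using qom \<open>le w' w1\<close> \<open>le w1 w\<close> unfolding quasi_orthomodular_nearsemilattice_def
    by (blast intro: nearsemilattice_trans)
  ultimately show "\<exists>y' w'. le y' y \<and> le w' w \<and> is_join le y' w' x" by blast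
qed

theorem theorem4:
  fixes le :: "'a \<Rightarrow> 'a \<Rightarrow> bool" and z :: 'a and orth :: "'a \<Rightarrow> 'a \<Rightarrow> bool"
  assumes "quasi_orthomodular_nearsemilattice le z orth"
  shows "distributive le \<longleftrightarrow> riesz_decomposition le orth"
proof
  have "orthogonality le z orth"
    using assms unfolding quasi_orthomodular_nearsemilattice_def by blast
  then show "distributive le \<Longrightarrow> riesz_decomposition le orth"
    by (rule distributive_imp_riesz_decomposition)
  show "riesz_decomposition le orth \<Longrightarrow> distributive le"
    using assms by (rule riesz_decomposition_imp_distributive)
qed

end
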